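(* Let $k$ be a field, $D$ a $k$-algebra, $\sigma$ an automorphism of $D$, $a$ central in $D$, and $A=D(\sigma,a)$. (i) If $\sigma^m$ is an inner automorphism for some $m\geq1$ (i.e. there is a unit $u\in D$ with $\sigma^m(d)=udu^{-1}$ for all $d\in D$), then $\operatorname{GKdim}(A)=\operatorname{GKdim}(D)+1$. (ii) If $\sigma$ has finite order, then $\operatorname{GKdim}(A)=\operatorname{GKdim}(D)+1$.
   Context: The generalized Weyl algebra $D(\sigma,a)$ is generated by $D$ and indeterminates $x,y$ with $xd=\sigma(d)x$, $yd=\sigma^{-1}(d)y$ ($d\in D$), $yx=a$, $xy=\sigma(a)$. $\operatorname{GKdim}(B)=\sup_V\limsup_{n\to\infty}\log_n\dim_k(\sum_{i=0}^nV^i)$ over finite-dimensional subspaces $V$ of $B$. *)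

theory Defs
  imports Complex_Main "HOL-Library.Extended_Real" "HOL-Library.Liminf_Limsup"
begin

text \<open>A k-algebra is modelled as a ring type 'a :: ring_1 together with a scalar
multiplication s :: 'k => 'a => 'a (in the intended uses s c b = iota c * b for a
central ring homomorphism iota from k).\<close>

definition subspace_prod :: "('k::field \<Rightarrow> 'a::ring_1 \<Rightarrow> 'a) \<Rightarrow> 'a set \<Rightarrow> 'a set \<Rightarrow> 'a set" where
  "subspace_prod s V W = module.span s {v * w | v w. v \<in> V \<and> w \<in> W}"

fun subspace_power :: "('k::field \<Rightarrow> 'a::ring_1 \<Rightarrow> 'a) \<Rightarrow> 'a set \<Rightarrow> nat \<Rightarrow> 'a set" where
  "subspace_power s V 0 = module.span s {1}"
| "subspace_power s V (Suc n) = subspace_prod s (subspace_power s V n) V"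

definition GKdim :: "('k::field \<Rightarrow> 'a::ring_1 \<Rightarrow> 'a) \<Rightarrow> ereal" where
  "GKdim s = (SUP V \<in> {V. module.subspace s V \<and> (\<exists>B. finite B \<and> V = module.span s B)}.
      limsup (\<lambda>n::nat. ereal (log (real n)
        (real (vector_space.dim s (module.span s (\<Union>i\<in>{0..n}. subspace_power s V i)))))))"

definition k_algebra_emb :: "('k::field \<Rightarrow> 'd::ring_1) \<Rightarrow> bool" where
  "k_algebra_emb \<iota> \<longleftrightarrow> \<iota> 1 = 1 \<and> (\<forall>c e. \<iota> (c + e) = \<iota> c + \<iota> e) \<and>
     (\<forall>c e. \<iota> (c * e) = \<iota> c * \<iota> e) \<and> (\<forall>c d. \<iota> c * d = d * \<iota> c)"

definition k_algebra_aut :: "('k::field \<Rightarrow> 'd::ring_1) \<Rightarrow> ('d \<Rightarrow> 'd) \<Rightarrow> bool" where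
  "k_algebra_aut \<iota> \<sigma> \<longleftrightarrow> bij \<sigma> \<and> \<sigma> 1 = 1 \<and> (\<forall>d e. \<sigma> (d + e) = \<sigma> d + \<sigma> e) \<and>
     (\<forall>d e. \<sigma> (d * e) = \<sigma> d * \<sigma> e) \<and> (\<forall>c. \<sigma> (\<iota> c) = \<iota> c)"

definition unital_ring_hom :: "('d::ring_1 \<Rightarrow> 'a::ring_1) \<Rightarrow> bool" where
  "unital_ring_hom \<phi> \<longleftrightarrow> \<phi> 1 = 1 \<and> (\<forall>d e. \<phi> (d + e) = \<phi> d + \<phi> e) \<and>
     (\<forall>d e. \<phi> (d * e) = \<phi> d * \<phi> e)"

text \<open>(A, phi, x, y) is the generalized Weyl algebra D(sigma, a): D embeds via phi, x and y
satisfy the defining relations, and A is the free left D-module on the monomials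
x^n (n >= 0) and y^m (m >= 1), i.e. every element has a unique normal form.\<close>
definition is_GWA :: "('d::ring_1 \<Rightarrow> 'd) \<Rightarrow> 'd \<Rightarrow> ('d \<Rightarrow> 'a::ring_1) \<Rightarrow> 'a \<Rightarrow> 'a \<Rightarrow> bool" where
  "is_GWA \<sigma> a \<phi> x y \<longleftrightarrow> unital_ring_hom \<phi> \<and>
     (\<forall>d. x * \<phi> d = \<phi> (\<sigma> d) * x) \<and> (\<forall>d. y * \<phi> d = \<phi> (inv \<sigma> d) * y) \<and>
     y * x = \<phi> a \<and> x * y = \<phi> (\<sigma> a) \<and>
     (\<forall>b. \<exists>!(c, e). finite {n. c n \<noteq> 0} \<and> finite {n. e n \<noteq> 0} \<and>
        b = (\<Sum>n\<in>{n. c n \<noteq> 0}. \<phi> (c n) * x ^ n) + (\<Sum>n\<in>{n. e n \<noteq> 0}. \<phi> (e n) * y ^ Suc n))"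

end

theory Submission
  imports Defs "HOL-Library.Set_Algebras"
begin

text \<open>
  Lower bound: if \<beta> is a basis of the span of words of length at most n over a finite
  B \<subseteq> D, the (n + 1) card \<beta> elements \<phi>(e) x^j (e \<in> \<beta>, j \<le> n) are linearly independent by
  uniqueness of the normal form, and they are words of length at most 2n over {1, x} \<union> \<phi>(B).
  The extra factor n in the growth function raises the growth degree by one.

  Upper bound: pushing x and y to the right, a word of length N over {x, y} \<union> \<phi>(E) becomes
  \<phi>(d) z_l with |l| \<le> N, where z_l is x^l or y^(-l) and d is a product of elements \<sigma>^k(e).
  As \<sigma>^m is conjugation by u, writing k = q m + r with 0 \<le> r < m gives
  \<sigma>^k(e) = u^q \<sigma>^r(e) u^(-q); adjacent powers of u telescope, so d is a word of length at
  most 4N over the finite set {1, u, v} \<union> {\<sigma>^r(e) | r < m, e \<in> E \<union> {a}}.  Hence the span of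
  the words of length at most N in A has dimension at most 2N + 1 times that of the words of
  length at most 4N in D, and the growth degree increases by at most one.
\<close>

lemma set_power_mono: "A \<subseteq> B \<Longrightarrow> A ^ n \<subseteq> (B :: 'a::monoid_mult set) ^ n"
  by (induction n) (simp_all add: set_times_mono2)

lemma one_in_set_power: "(1::'a::monoid_mult) \<in> A \<Longrightarrow> 1 \<in> A ^ n"
  by (induction n) (use set_times_intro[of 1 A 1] in auto)

lemma power_in_set_power: "(a::'a::monoid_mult) \<in> A \<Longrightarrow> a ^ n \<in> A ^ n"
  by (induction n) auto

lemma mult_power_in_set_power: "(p::'a::monoid_mult) \<in> G \<Longrightarrow> z \<in> G \<Longrightarrow> p * z ^ n \<in> G ^ Suc n"
  by (simp add: power_in_set_power set_times_intro)

lemma set_power_mono_exp: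
  assumes "(1::'a::monoid_mult) \<in> A" "m \<le> n"
  shows "A ^ m \<subseteq> A ^ n"
proof -
  have "A ^ m = A ^ m * 1" by (rule mult_1_right[symmetric])
  also have "\<dots> \<subseteq> A ^ m * A ^ (n - m)"
    using one_in_set_power[OF assms(1)] by (intro set_times_mono2) auto
  also have "\<dots> = A ^ n" using assms(2) by (simp flip: power_add)
  finally show ?thesis .
qed

lemma finite_set_power: "finite A \<Longrightarrow> finite ((A :: 'a::monoid_mult set) ^ n)"
  by (induction n) (auto intro: finite_set_times)

lemma image_set_power:
  fixes f :: "'a::monoid_mult \<Rightarrow> 'b::monoid_mult"
  assumes "f 1 = 1" "\<And>a b. f (a * b) = f a * f b"
  shows "f ` (A ^ n) = (f ` A) ^ n"
proof (induction n)
  case (Suc n)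
  have "f ` (A * A ^ n) = f ` A * f ` (A ^ n)"
  proof
    show "f ` (A * A ^ n) \<subseteq> f ` A * f ` (A ^ n)"
      by (auto elim!: set_times_elim intro!: set_times_intro simp: assms)
    show "f ` A * f ` (A ^ n) \<subseteq> f ` (A * A ^ n)"
      by (auto elim!: set_times_elim simp flip: assms(2))
  qed
  then show ?case by (simp add: Suc)
qed (simp add: assms)

lemma set_power_insert_one:
  "(insert 1 B) ^ n = (\<Union>i\<le>n. (B :: 'a::monoid_mult set) ^ i)"
proof (induction n)
  case (Suc n)
  have "insert 1 B * X = X \<union> B * X" for X by (auto simp: set_times_def)
  then have "(insert 1 B) ^ Suc n = (\<Union>i\<le>n. B ^ i) \<union> (\<Union>i\<le>n. B ^ Suc i)"
    by (simp add: Suc set_times_UNION_distrib UN_Un_distrib)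
  also have "\<dots> = (\<Union>i \<in> {..n} \<union> Suc ` {..n}. B ^ i)"
    by (simp only: UN_Un image_image)
  also have "{..n} \<union> Suc ` {..n} = {..Suc n}"
    by (auto simp: image_Suc_atMost)
  finally show ?case .
qed simp

section \<open>Degree of polynomial growth\<close>

definition growth_degree :: "(nat \<Rightarrow> nat) \<Rightarrow> ereal" where
  "growth_degree f = limsup (\<lambda>n. ereal (log (real n) (real (f n))))"

lemma eventually_less_powr:
  fixes e M :: real
  assumes "e > 0"
  shows "\<forall>\<^sub>F n in sequentially. M < real n powr e"
  using eventually_gt_at_top[of "nat \<lceil>(\<bar>M\<bar> + 1) powr (1 / e)\<rceil>"]
proof eventually_elim
  case (elim n)
  define b where "b = (\<bar>M\<bar> + 1) powr (1 / e)"
  have "b < real n" using elim real_nat_ceiling_ge[of b] unfolding b_def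
    by (meson of_nat_less_iff le_less_trans)
  then have "b powr e < real n powr e" using assms by (intro powr_less_mono2) (auto simp: b_def)
  moreover have "b powr e = \<bar>M\<bar> + 1" using assms by (simp add: b_def powr_powr)
  ultimately show ?case by linarith
qed

lemma eventually_less_powr_if_growth_degree_less:
  assumes "\<And>n. f n \<ge> 1" "growth_degree f < ereal z"
  shows "\<forall>\<^sub>F n in sequentially. real (f n) < real n powr z"
proof -
  have "\<forall>\<^sub>F n in sequentially. log (real n) (real (f n)) < z"
    using Limsup_lessD[OF assms(2)[unfolded growth_degree_def]] by simp
  with eventually_gt_at_top[of 1] show ?thesis
  proof eventually_elim
    case (elim n)
    moreover have "real (f n) > 0" using assms(1)[of n] by simp
    ultimately show ?case by (simp add: log_less_iff)
  qed
qed

lemma growth_degree_le_if_eventually_le_powr: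
  assumes "\<And>n. g n \<ge> 1" "\<forall>\<^sub>F n in sequentially. real (g n) \<le> real n powr t"
  shows "growth_degree g \<le> ereal t"
  unfolding growth_degree_def
proof (rule Limsup_bounded)
  show "\<forall>\<^sub>F n in sequentially. ereal (log (real n) (real (g n))) \<le> ereal t"
    using assms(2) eventually_gt_at_top[of 1]
  proof eventually_elim
    case (elim n)
    moreover have "real (g n) > 0" using assms(1)[of n] by simp
    ultimately show ?case by (simp add: log_le_iff)
  qed
qed

lemma growth_degree_le_plus_one:
  fixes f g :: "nat \<Rightarrow> nat"
  assumes K: "K \<ge> 1" and f1: "\<And>n. f n \<ge> 1" and g1: "\<And>n. g n \<ge> 1"
    and bound: "\<And>n. n \<ge> 1 \<Longrightarrow> g n \<le> c * n * f (K * n)"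
  shows "growth_degree g \<le> growth_degree f + 1"
proof (rule dense_ge)
  fix y assume y: "growth_degree f + 1 < y"
  show "growth_degree g \<le> y"
  proof (cases y)
    case (real t)
    have "growth_degree f < ereal (t - 1)" using y real by (cases "growth_degree f") auto
    then obtain z where z: "growth_degree f < ereal z" "z < t - 1"
      using ereal_dense2 by force
    obtain N where N: "\<And>n. n \<ge> N \<Longrightarrow> real (f n) < real n powr z"
      using eventually_less_powr_if_growth_degree_less[OF f1 z(1)]
      unfolding eventually_sequentially by blast
    have large: "\<forall>\<^sub>F n in sequentially. real c * real K powr z < real n powr (t - 1 - z)"
      using z(2) by (intro eventually_less_powr) simp
    have "\<forall>\<^sub>F n in sequentially. real (g n) \<le> real n powr t"
      using eventually_ge_at_top[of N] eventually_ge_at_top[of 2] large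
    proof eventually_elim
      case (elim n)
      then have n1: "real n > 1" by simp
      have "N \<le> K * n" using K elim(1) by (metis le_trans mult_le_mono1 mult_1)
      then have fK: "real (f (K * n)) \<le> real (K * n) powr z" by (rule less_imp_le[OF N])
      have "real (g n) \<le> real c * real n * real (f (K * n))"
        using bound[of n] elim by (simp flip: of_nat_mult)
      also have "\<dots> \<le> real c * real n * real (K * n) powr z"
        using fK by (intro mult_left_mono) auto
      also have "\<dots> = real c * real K powr z * real n powr (1 + z)"
        using n1 K by (simp add: powr_mult powr_add)
      also have "\<dots> \<le> real n powr (t - 1 - z) * real n powr (1 + z)"
        using elim by (intro mult_right_mono) auto
      also have "\<dots> = real n powr t" by (simp flip: powr_add)
      finally show ?case .
    qed
    then show ?thesis using real growth_degree_le_if_eventually_le_powr[OF g1] by simp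
  qed (use y in auto)
qed

lemma growth_degree_plus_one_le:
  fixes f g :: "nat \<Rightarrow> nat"
  assumes f1: "\<And>n. f n \<ge> 1" and g1: "\<And>n. g n \<ge> 1"
    and bound: "\<And>n. (n + 1) * f n \<le> g (2 * n)"
  shows "growth_degree f + 1 \<le> growth_degree g"
proof (rule ccontr)
  assume "\<not> growth_degree f + 1 \<le> growth_degree g"
  then obtain t where t: "growth_degree g < ereal t" "ereal t < growth_degree f + 1"
    using ereal_dense2 by (metis not_le)
  have "ereal (t - 1) < growth_degree f" using t(2) by (cases "growth_degree f") auto
  then obtain z where z: "t - 1 < z" "ereal z < growth_degree f"
    using ereal_dense2 by force
  obtain N where N: "\<And>n. n \<ge> N \<Longrightarrow> real (g n) < real n powr t"
    using eventually_less_powr_if_growth_degree_less[OF g1 t(1)]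
    unfolding eventually_sequentially by blast
  have large: "\<forall>\<^sub>F n in sequentially. 2 powr t < real n powr (1 + z - t)"
    using z(1) by (intro eventually_less_powr) simp
  have "\<forall>\<^sub>F n in sequentially. real (f n) \<le> real n powr z"
    using eventually_ge_at_top[of N] eventually_ge_at_top[of 2] large
  proof eventually_elim
    case (elim n)
    then have n1: "real n > 1" by simp
    have "real n * real (f n) \<le> real (g (2 * n))"
      using bound[of n] by (simp flip: of_nat_mult of_nat_Suc)
    also have "\<dots> < real (2 * n) powr t" using elim by (intro N) simp
    also have "\<dots> = 2 powr t * real n powr t" by (simp add: powr_mult)
    also have "\<dots> \<le> real n powr (1 + z - t) * real n powr t"
      using elim by (intro mult_right_mono) auto
    also have "\<dots> = real n * real n powr z" using n1 by (simp flip: powr_add add: powr_add)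
    finally show ?case using n1 by simp
  qed
  then have "growth_degree f \<le> ereal z" by (rule growth_degree_le_if_eventually_le_powr[OF f1])
  then show False using z(2) by simp
qed

lemma subspace_prod_eq_span_times: "subspace_prod s V W = module.span s (V * W)"
  unfolding subspace_prod_def set_times_def by (rule arg_cong[where f = "module.span s"]) blast

locale k_algebra =
  fixes \<kappa> :: "'k::field \<Rightarrow> 'a::ring_1"
  assumes k_algebra_emb: "k_algebra_emb \<kappa>"
begin

lemma scalar_one: "\<kappa> 1 = 1"
  and scalar_add: "\<kappa> (c + e) = \<kappa> c + \<kappa> e"
  and scalar_mult: "\<kappa> (c * e) = \<kappa> c * \<kappa> e"
  and scalar_central: "\<kappa> c * b = b * \<kappa> c"
  using k_algebra_emb unfolding k_algebra_emb_def by blast+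

sublocale vector_space "\<lambda>c b. \<kappa> c * b"
  by unfold_locales (auto simp: distrib_left distrib_right scalar_add scalar_mult scalar_one mult.assoc)

lemma span_mult:
  assumes "p \<in> span S" "q \<in> span T"
  shows "p * q \<in> span (S * T)"
proof -
  have "s * q \<in> span (S * T)" if "s \<in> S" for s
    using assms(2)
  proof (induction rule: span_induct)
    case base
    have "s * (\<kappa> c * t) = \<kappa> c * (s * t)" for c t
      by (metis scalar_central mult.assoc)
    then show ?case unfolding subspace_def
      by (auto simp: distrib_left intro: span_add span_scale span_zero)
  qed (use that in \<open>auto intro: span_base\<close>)
  with assms(1) show ?thesis
  proof (induction rule: span_induct)
    case base
    show ?case unfolding subspace_def
      by (auto simp: distrib_right mult.assoc intro: span_add span_scale span_zero)
  qed auto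
qed

lemma span_times_span: "span (span S * span T) = span (S * T)"
proof
  show "span (span S * span T) \<subseteq> span (S * T)"
    by (rule span_minimal) (auto elim!: set_times_elim intro: span_mult)
  show "span (S * T) \<subseteq> span (span S * span T)"
    by (intro span_mono set_times_mono2 span_superset)
qed

lemma subspace_power_span: "subspace_power (\<lambda>c b. \<kappa> c * b) (span B) n = span (B ^ n)"
proof (induction n)
  case (Suc n)
  have "subspace_power (\<lambda>c b. \<kappa> c * b) (span B) (Suc n) = span (span (B ^ n) * span B)"
    by (simp add: Suc subspace_prod_eq_span_times)
  then show ?case unfolding power_Suc2 by (simp only: span_times_span)
qed simp

lemma span_set_power_le:
  assumes "B \<subseteq> span (Z ^ k)"
  shows "B ^ n \<subseteq> span (Z ^ (k * n))"
proof (induction n)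
  case (Suc n)
  have "B ^ Suc n \<subseteq> span (Z ^ (k * n) * Z ^ k)"
    unfolding power_Suc2 using Suc assms by (auto elim!: set_times_elim intro!: span_mult)
  then show ?case by (simp flip: power_add add: add.commute)
qed (simp add: span_superset)

lemma card_le_dim_span:
  assumes "finite W" "independent Q" "Q \<subseteq> span W"
  shows "card Q \<le> dim (span W)"
proof -
  obtain \<beta> where \<beta>: "\<beta> \<subseteq> span W" "independent \<beta>" "span W \<subseteq> span \<beta>" "card \<beta> = dim (span W)"
    using basis_exists by blast
  have "finite \<beta>" using independent_span_bound[OF assms(1)] \<beta>(1,2) by blast
  moreover have "Q \<subseteq> span \<beta>" using assms(3) \<beta>(3) by blast
  ultimately show ?thesis using independent_span_bound[OF _ assms(2)] \<beta>(4) by metis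
qed

definition growth :: "'a set \<Rightarrow> nat \<Rightarrow> nat" where
  "growth B n = dim (span ((insert 1 B) ^ n))"

lemma growth_pos:
  assumes "finite B"
  shows "growth B n \<ge> 1"
proof -
  have "{1} \<subseteq> span ((insert 1 B) ^ n)" by (auto intro: span_base one_in_set_power)
  with assms have "card {1::'a} \<le> growth B n"
    unfolding growth_def by (intro card_le_dim_span[OF finite_set_power]) auto
  then show ?thesis by simp
qed

lemma GKdim_eq_SUP_growth_degree:
  "GKdim (\<lambda>c b. \<kappa> c * b) = (SUP B\<in>{B. finite B}. growth_degree (growth B))"
proof -
  have span_eq: "span (\<Union>i\<in>{0..n}. subspace_power (\<lambda>c b. \<kappa> c * b) (span B) i)
      = span ((insert 1 B) ^ n)" for B n
  proof -
    have "span (\<Union>i\<le>n. span (B ^ i)) = span (\<Union>i\<le>n. B ^ i)"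
    proof
      show "span (\<Union>i\<le>n. span (B ^ i)) \<subseteq> span (\<Union>i\<le>n. B ^ i)"
        by (rule span_minimal) (auto intro: span_mono[THEN subsetD])
      show "span (\<Union>i\<le>n. B ^ i) \<subseteq> span (\<Union>i\<le>n. span (B ^ i))"
        by (rule span_mono) (auto intro: span_base)
    qed
    then show ?thesis by (simp add: subspace_power_span set_power_insert_one atLeast0AtMost)
  qed
  have finitely_spanned: "{V. subspace V \<and> (\<exists>B. finite B \<and> V = span B)} = span ` {B. finite B}"
    by auto
  show ?thesis
    unfolding GKdim_def finitely_spanned image_image span_eq growth_degree_def growth_def ..
qed

end

definition unit_power :: "'a::monoid_mult \<Rightarrow> 'a \<Rightarrow> int \<Rightarrow> 'a" where
  "unit_power u v q = (if 0 \<le> q then u ^ nat q else v ^ nat (- q))"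

lemma unit_power_0 [simp]: "unit_power u v 0 = 1"
  and unit_power_1 [simp]: "unit_power u v 1 = u"
  and unit_power_minus_1 [simp]: "unit_power u v (- 1) = v"
  by (simp_all add: unit_power_def)

lemma power_mult_power_right_inverse:
  fixes u v :: "'a::monoid_mult"
  assumes "u * v = 1"
  shows "u ^ i * v ^ j = (if j \<le> i then u ^ (i - j) else v ^ (j - i))"
proof (induction j arbitrary: i)
  case (Suc j)
  have split: "u ^ i * v ^ Suc j = (u ^ i * v ^ j) * v" by (simp only: power_Suc2 mult.assoc)
  show ?case
  proof (cases "Suc j \<le> i")
    case True
    then obtain k where k: "i - j = Suc k" "i - Suc j = k" by (metis Suc_diff_le diff_Suc_Suc Suc_le_D)
    have "u ^ i * v ^ Suc j = u ^ Suc k * v" using split Suc[of i] True k(1) by simp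
    also have "\<dots> = u ^ k" using assms by (simp only: power_Suc2 mult.assoc mult_1_right)
    finally show ?thesis using True k(2) by simp
  next
    case False
    then have "u ^ i * v ^ Suc j = v ^ (j - i) * v" using split Suc[of i] by auto
    also have "\<dots> = v ^ (Suc j - i)" using False by (simp add: Suc_diff_le flip: power_Suc2)
    finally show ?thesis using False by simp
  qed
qed simp

lemma unit_power_add:
  fixes u v :: "'a::monoid_mult"
  assumes uv: "u * v = 1" and vu: "v * u = 1"
  shows "unit_power u v p * unit_power u v q = unit_power u v (p + q)"
proof -
  consider "0 \<le> p" "0 \<le> q" | "p < 0" "q < 0" | "0 \<le> p" "q < 0" | "p < 0" "0 \<le> q" by linarith
  then show ?thesis
  proof cases
    case 1 then show ?thesis by (simp add: unit_power_def nat_add_distrib flip: power_add)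
  next
    case 2 then show ?thesis by (simp add: unit_power_def flip: power_add nat_add_distrib)
  next
    case 3
    then have "nat (- q) \<le> nat p \<longleftrightarrow> 0 \<le> p + q" "nat p - nat (- q) = nat (p + q)"
      "nat (- q) - nat p = nat (- (p + q))" by auto
    with 3 show ?thesis by (simp add: unit_power_def power_mult_power_right_inverse[OF uv])
  next
    case 4
    then have "nat q \<le> nat (- p) \<longleftrightarrow> p + q \<le> 0" "nat (- p) - nat q = nat (- (p + q))"
      "nat q - nat (- p) = nat (p + q)" by auto
    with 4 show ?thesis by (auto simp: unit_power_def power_mult_power_right_inverse[OF vu])
  qed
qed

lemma abs_div_diff_le_one:
  fixes l l' m :: int
  assumes "m > 0" "\<bar>l - l'\<bar> \<le> 1"
  shows "\<bar>l div m - l' div m\<bar> \<le> 1"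
proof -
  have "l div m \<le> l' div m \<and> l' div m \<le> l div m + 1" if "l \<le> l'" "l' \<le> l + 1" for l l'
  proof
    show "l div m \<le> l' div m" using that assms by (intro zdiv_mono1) auto
    have "l' div m \<le> (l + m) div m" using that assms by (intro zdiv_mono1) auto
    then show "l' div m \<le> l div m + 1" using assms by simp
  qed
  from this[of l l'] this[of l' l] assms(2) show ?thesis by (cases "l \<le> l'") auto
qed

lemma abs_div_le_abs:
  fixes l m :: int
  assumes "m > 0"
  shows "\<bar>l div m\<bar> \<le> \<bar>l\<bar>"
proof (cases "0 \<le> l")
  case True
  then have "l div m \<le> l div 1" using assms by (intro zdiv_mono2) auto
  then show ?thesis using True assms by (simp add: pos_imp_zdiv_nonneg_iff)
next
  case False
  then have "(l * m) div m \<le> l div m" using assms by (intro zdiv_mono1) (auto simp: mult_le_cancel_left1)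
  moreover have "l div m \<le> 0" using False assms by (simp add: div_nonpos_pos_le0)
  ultimately show ?thesis using assms by simp
qed

section \<open>Generalized Weyl algebras\<close>

locale gwa =
  fixes \<iota> :: "'k::field \<Rightarrow> 'd::ring_1" and \<sigma> :: "'d \<Rightarrow> 'd" and a :: 'd
    and \<phi> :: "'d \<Rightarrow> 'a::ring_1" and x y :: 'a
  assumes emb: "k_algebra_emb \<iota>" and aut: "k_algebra_aut \<iota> \<sigma>" and GWA: "is_GWA \<sigma> a \<phi> x y"
begin

lemma sigma_bij: "bij \<sigma>" and sigma_scalar: "\<sigma> (\<iota> c) = \<iota> c"
  using aut unfolding k_algebra_aut_def by auto

lemma sigma_inv_sigma [simp]: "inv \<sigma> (\<sigma> d) = d" and sigma_sigma_inv [simp]: "\<sigma> (inv \<sigma> d) = d"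
  using sigma_bij by (simp_all add: bij_def surj_f_inv_f)

lemma phi_one: "\<phi> 1 = 1" and phi_add: "\<phi> (d + e) = \<phi> d + \<phi> e"
  and phi_mult: "\<phi> (d * e) = \<phi> d * \<phi> e"
  using GWA unfolding is_GWA_def unital_ring_hom_def by auto

lemma x_phi: "x * \<phi> d = \<phi> (\<sigma> d) * x" and y_phi: "y * \<phi> d = \<phi> (inv \<sigma> d) * y"
  and y_x: "y * x = \<phi> a" and x_y: "x * y = \<phi> (\<sigma> a)"
  using GWA unfolding is_GWA_def by auto

lemma phi_zero: "\<phi> 0 = 0"
  using phi_add[of 0 0] by simp

lemma phi_uminus: "\<phi> (- d) = - \<phi> d"
  using phi_add[of "- d" d] by (simp add: phi_zero eq_neg_iff_add_eq_0)

lemma phi_diff: "\<phi> (d - e) = \<phi> d - \<phi> e"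
  using phi_add[of d "- e"] by (simp add: phi_uminus)

lemma phi_sum: "\<phi> (sum f S) = (\<Sum>i\<in>S. \<phi> (f i))"
  by (induction S rule: infinite_finite_induct) (auto simp: phi_zero phi_add)

lemma power_mult_phi:
  assumes "\<And>d. z * \<phi> d = \<phi> (\<tau> d) * z"
  shows "z ^ n * \<phi> d = \<phi> ((\<tau> ^^ n) d) * z ^ n"
proof (induction n)
  case (Suc n)
  have "z ^ Suc n * \<phi> d = z * (z ^ n * \<phi> d)" by (simp add: mult.assoc)
  also have "\<dots> = (z * \<phi> ((\<tau> ^^ n) d)) * z ^ n" by (simp add: Suc mult.assoc)
  also have "\<dots> = \<phi> ((\<tau> ^^ Suc n) d) * z ^ Suc n" by (simp add: assms mult.assoc)
  finally show ?case .
qed simp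

lemmas x_power_phi = power_mult_phi[OF x_phi]
   and y_power_phi = power_mult_phi[OF y_phi]

definition normal_form :: "(nat \<Rightarrow> 'd) \<Rightarrow> (nat \<Rightarrow> 'd) \<Rightarrow> 'a" where
  "normal_form c e = (\<Sum>n | c n \<noteq> 0. \<phi> (c n) * x ^ n) + (\<Sum>n | e n \<noteq> 0. \<phi> (e n) * y ^ Suc n)"

lemma normal_form_ex1:
  "\<exists>!(c, e). finite {n. c n \<noteq> 0} \<and> finite {n. e n \<noteq> 0} \<and> b = normal_form c e"
  using GWA unfolding is_GWA_def normal_form_def by (elim conjE allE)

lemma normal_form_exists:
  obtains c e where "finite {n. c n \<noteq> 0}" "finite {n. e n \<noteq> 0}" "b = normal_form c e"
proof -
  obtain p where "case p of (c, e) \<Rightarrow> finite {n. c n \<noteq> 0} \<and> finite {n. e n \<noteq> 0} \<and> b = normal_form c e"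
    using ex1_implies_ex[OF normal_form_ex1] by blast
  then show thesis using that by (cases p) blast
qed

lemma normal_form_unique:
  assumes "finite {n. c n \<noteq> 0}" "finite {n. e n \<noteq> 0}" "finite {n. c' n \<noteq> 0}" "finite {n. e' n \<noteq> 0}"
    and "normal_form c e = normal_form c' e'"
  shows "c = c'" "e = e'"
proof -
  let ?P = "\<lambda>(c, e). finite {n. c n \<noteq> 0} \<and> finite {n. e n \<noteq> 0} \<and> normal_form c' e' = normal_form c e"
  obtain p where p: "\<And>q. ?P q \<Longrightarrow> q = p"
    using normal_form_ex1[of "normal_form c' e'"] unfolding Ex1_def by blast
  have "(c, e) = p" "(c', e') = p" using assms by (auto intro!: p)
  then show "c = c'" "e = e'" by auto
qed

lemma x_coefficients_zero:
  assumes "finite J" "(\<Sum>j\<in>J. \<phi> (d j) * x ^ j) = 0" "j \<in> J"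
  shows "d j = 0"
proof -
  define c where "c = (\<lambda>j. if j \<in> J then d j else 0)"
  have fin: "finite {n. c n \<noteq> 0}" using assms(1) by (rule rev_finite_subset) (auto simp: c_def)
  have "(\<Sum>n | c n \<noteq> 0. \<phi> (c n) * x ^ n) = (\<Sum>n\<in>J. \<phi> (c n) * x ^ n)"
    using assms(1) by (intro sum.mono_neutral_left) (auto simp: c_def phi_zero)
  also have "\<dots> = 0" using assms(2) by (simp add: c_def)
  finally have "normal_form c (\<lambda>_. 0) = normal_form (\<lambda>_. 0) (\<lambda>_. 0)" by (simp add: normal_form_def)
  from normal_form_unique(1)[OF fin _ _ _ this] have "c = (\<lambda>_. 0)" by simp
  then show ?thesis using assms(3) unfolding c_def by metis
qed

lemma phi_scalar_central: "\<phi> (\<iota> c) * b = b * \<phi> (\<iota> c)"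
proof -
  have \<iota>_central: "\<iota> c * d = d * \<iota> c" for d using emb unfolding k_algebra_emb_def by blast
  have fixed: "(\<sigma> ^^ n) (\<iota> c) = \<iota> c" "(inv \<sigma> ^^ n) (\<iota> c) = \<iota> c" for n
    by (induction n) (simp_all add: sigma_scalar, metis sigma_inv_sigma sigma_scalar)
  have "\<phi> (\<iota> c) * (\<phi> d * z ^ n) = (\<phi> d * z ^ n) * \<phi> (\<iota> c)" if "z = x \<or> z = y" for d z n
  proof -
    have "z ^ n * \<phi> (\<iota> c) = \<phi> (\<iota> c) * z ^ n" using that by (auto simp: x_power_phi y_power_phi fixed)
    then have "(\<phi> d * z ^ n) * \<phi> (\<iota> c) = (\<phi> d * \<phi> (\<iota> c)) * z ^ n" by (simp add: mult.assoc)
    also have "\<phi> d * \<phi> (\<iota> c) = \<phi> (\<iota> c) * \<phi> d" by (metis \<iota>_central phi_mult)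
    also have "\<dots> * z ^ n = \<phi> (\<iota> c) * (\<phi> d * z ^ n)" by (simp only: mult.assoc)
    finally show ?thesis by simp
  qed
  moreover obtain c' e where "b = normal_form c' e" using normal_form_exists by blast
  ultimately show ?thesis unfolding normal_form_def
    by (simp add: distrib_left distrib_right sum_distrib_left sum_distrib_right del: power_Suc)
qed

sublocale D: k_algebra \<iota> by unfold_locales (rule emb)

sublocale A: k_algebra "\<lambda>c. \<phi> (\<iota> c)"
proof
  have "\<iota> 1 = 1" "\<iota> (c + e) = \<iota> c + \<iota> e" "\<iota> (c * e) = \<iota> c * \<iota> e" for c e
    using emb unfolding k_algebra_emb_def by blast+
  then show "k_algebra_emb (\<lambda>c. \<phi> (\<iota> c))"
    unfolding k_algebra_emb_def by (intro conjI allI phi_scalar_central) (simp_all add: phi_one phi_add phi_mult)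
qed

lemma phi_mult_in_span:
  assumes "d \<in> D.span S"
  shows "\<phi> d * w \<in> A.span ((\<lambda>d. \<phi> d * w) ` S)"
proof -
  have "module_hom (\<lambda>c d. \<iota> c * d) (\<lambda>c b. \<phi> (\<iota> c) * b) (\<lambda>d. \<phi> d * w)"
    unfolding module_hom_def module_hom_axioms_def using D.module_axioms A.module_axioms
    by (simp add: phi_add phi_mult distrib_right mult.assoc)
  then show ?thesis using assms by (simp add: module_hom.span_image)
qed

lemma inj_on_x_monomials:
  assumes "D.independent \<beta>"
  shows "inj_on (\<lambda>(e, j). \<phi> e * x ^ j) (\<beta> \<times> J)"
proof (rule inj_onI, clarify)
  have "0 \<notin> \<beta>" using assms D.dependent_zero by blast
  fix e j e' j' assume e: "e \<in> \<beta>" "e' \<in> \<beta>" and eq: "\<phi> e * x ^ j = \<phi> e' * x ^ j'"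
  show "e = e' \<and> j = j'"
  proof (cases "j = j'")
    case True
    with eq have "(\<Sum>i\<in>{j}. \<phi> (e - e') * x ^ i) = 0"
      by (simp add: phi_diff algebra_simps)
    then show ?thesis using True x_coefficients_zero[of "{j}" "\<lambda>_. e - e'" j] by simp
  next
    case False
    with eq have "(\<Sum>i\<in>{j, j'}. \<phi> (if i = j then e else - e') * x ^ i) = 0"
      by (simp add: phi_uminus)
    then have "e = 0" using x_coefficients_zero[of "{j, j'}" "\<lambda>i. if i = j then e else - e'" j] by simp
    then show ?thesis using e \<open>0 \<notin> \<beta>\<close> by simp
  qed
qed

lemma x_monomials_independent:
  assumes indep: "D.independent \<beta>" and fin: "finite \<beta>" "finite J"
  shows "A.independent ((\<lambda>(e, j). \<phi> e * x ^ j) ` (\<beta> \<times> J))"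
proof (rule A.independent_if_scalars_zero)
  let ?F = "\<lambda>(e, j). \<phi> e * x ^ j"
  show "finite (?F ` (\<beta> \<times> J))" using fin by simp
  fix f q assume sum0: "(\<Sum>q\<in>?F ` (\<beta> \<times> J). \<phi> (\<iota> (f q)) * q) = 0" and q: "q \<in> ?F ` (\<beta> \<times> J)"
  define g where "g j e = f (?F (e, j))" for j e
  have "(\<Sum>q\<in>?F ` (\<beta> \<times> J). \<phi> (\<iota> (f q)) * q) = (\<Sum>p\<in>\<beta> \<times> J. \<phi> (\<iota> (f (?F p))) * ?F p)"
    by (rule sum.reindex[OF inj_on_x_monomials[OF indep], unfolded comp_def])
  also have "\<dots> = (\<Sum>e\<in>\<beta>. \<Sum>j\<in>J. \<phi> (\<iota> (g j e)) * (\<phi> e * x ^ j))"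
    by (simp add: sum.cartesian_product g_def split_def)
  also have "\<dots> = (\<Sum>j\<in>J. \<Sum>e\<in>\<beta>. \<phi> (\<iota> (g j e)) * (\<phi> e * x ^ j))"
    by (rule sum.swap)
  also have "\<dots> = (\<Sum>j\<in>J. \<phi> (\<Sum>e\<in>\<beta>. \<iota> (g j e) * e) * x ^ j)"
    by (simp add: phi_sum phi_mult sum_distrib_right mult.assoc)
  finally have coeffs: "(\<Sum>e\<in>\<beta>. \<iota> (g j e) * e) = 0" if "j \<in> J" for j
    using sum0 x_coefficients_zero[OF fin(2) _ that] by simp
  from q obtain e j where q: "q = ?F (e, j)" "e \<in> \<beta>" "j \<in> J" by blast
  have "g j e = 0"
    using indep coeffs[OF q(3)] q(2) fin(1) unfolding D.independent_explicit_finite_subsets by blast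
  then show "f q = 0" by (simp add: g_def q(1))
qed

lemma growth_lower_bound:
  assumes "finite B"
  shows "(n + 1) * D.growth B n \<le> A.growth (insert x (\<phi> ` B)) (2 * n)"
proof -
  define S where "S = (insert 1 B) ^ n"
  define C where "C = insert 1 (insert x (\<phi> ` B))"
  obtain \<beta> where \<beta>: "\<beta> \<subseteq> D.span S" "D.independent \<beta>" "D.span S \<subseteq> D.span \<beta>"
      "card \<beta> = D.dim (D.span S)"
    using D.basis_exists by blast
  have "finite S" unfolding S_def using assms by (simp add: finite_set_power)
  then have fin: "finite \<beta>" using D.independent_span_bound \<beta>(1,2) by blast
  let ?F = "\<lambda>(e, j). \<phi> e * x ^ j"
  have "?F ` (\<beta> \<times> {0..n}) \<subseteq> A.span (C ^ (2 * n))"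
  proof clarify
    fix e j assume e: "e \<in> \<beta>" and j: "j \<in> {0..n}"
    have "\<phi> ` S \<subseteq> C ^ n"
      unfolding S_def C_def image_set_power[of \<phi>, OF phi_one phi_mult]
      by (intro set_power_mono) (auto simp: phi_one)
    moreover have "\<phi> e \<in> A.span (\<phi> ` S)"
      using phi_mult_in_span[of e S 1] e \<beta>(1) by auto
    ultimately have "\<phi> e \<in> A.span (C ^ n)" using A.span_mono by blast
    moreover have "x ^ j \<in> C ^ n"
      using power_in_set_power[of x C j] set_power_mono_exp[of C j n] j by (auto simp: C_def)
    ultimately have "\<phi> e * x ^ j \<in> A.span (C ^ n * C ^ n)" by (intro A.span_mult[OF _ A.span_base])
    then show "\<phi> e * x ^ j \<in> A.span (C ^ (2 * n))" by (simp add: mult_2 power_add)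
  qed
  then have "card (?F ` (\<beta> \<times> {0..n})) \<le> A.growth (insert x (\<phi> ` B)) (2 * n)"
    unfolding A.growth_def C_def[symmetric] using x_monomials_independent[OF \<beta>(2) fin]
    by (intro A.card_le_dim_span) (auto simp: C_def assms finite_set_power)
  then show ?thesis
    using \<beta>(4) card_image[OF inj_on_x_monomials[OF \<beta>(2)]]
    by (simp add: D.growth_def S_def card_cartesian_product mult.commute)
qed

lemma GKdim_lower_bound: "GKdim (\<lambda>c d. \<iota> c * d) + 1 \<le> GKdim (\<lambda>c b. \<phi> (\<iota> c) * b)"
proof -
  have "growth_degree (D.growth B) + 1 \<le> GKdim (\<lambda>c b. \<phi> (\<iota> c) * b)" if B: "finite B" for B
  proof -
    have "finite (insert x (\<phi> ` B))" using B by simp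
    then have "growth_degree (D.growth B) + 1 \<le> growth_degree (A.growth (insert x (\<phi> ` B)))"
      using B by (intro growth_degree_plus_one_le D.growth_pos A.growth_pos growth_lower_bound)
    also have "\<dots> \<le> GKdim (\<lambda>c b. \<phi> (\<iota> c) * b)"
      unfolding A.GKdim_eq_SUP_growth_degree using \<open>finite (insert x (\<phi> ` B))\<close> by (intro SUP_upper) auto
    finally show ?thesis .
  qed
  then have "(SUP B\<in>{B. finite B}. growth_degree (D.growth B) + 1) \<le> GKdim (\<lambda>c b. \<phi> (\<iota> c) * b)"
    by (intro SUP_least) auto
  moreover have "(SUP B\<in>{B. finite B}. growth_degree (D.growth B) + 1)
      = (SUP B\<in>{B. finite B}. growth_degree (D.growth B)) + 1"
    by (rule SUP_ereal_add_left) auto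
  ultimately show ?thesis unfolding D.GKdim_eq_SUP_growth_degree by simp
qed

definition generators :: "'d set \<Rightarrow> 'a set" where
  "generators E = insert x (insert y (\<phi> ` E))"

lemma finite_subset_span_generators:
  assumes "finite B"
  obtains E K where "finite E" "K \<ge> 1" "B \<subseteq> A.span (generators E ^ K)"
proof -
  have "\<forall>b. \<exists>c e. finite {n. c n \<noteq> 0} \<and> finite {n. e n \<noteq> 0} \<and> b = normal_form c e"
    by (metis normal_form_exists)
  then obtain c e where fin: "\<And>b. finite {n. c b n \<noteq> 0}" "\<And>b. finite {n. e b n \<noteq> 0}"
    and nf: "\<And>b. b = normal_form (c b) (e b)"
    by metis
  define supp where "supp b = {n. c b n \<noteq> 0} \<union> {n. e b n \<noteq> 0}" for b
  define E where "E = insert 1 (\<Union>b\<in>B. c b ` supp b \<union> e b ` supp b)"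
  define K where "K = Suc (Suc (Max (\<Union>b\<in>B. supp b)))"
  have fin_supp: "finite (supp b)" for b using fin by (simp add: supp_def)
  have "1 \<in> generators E" using phi_one by (auto simp: generators_def E_def)
  then have mono: "generators E ^ n \<subseteq> generators E ^ K" if "n \<le> K" for n
    using that by (rule set_power_mono_exp)
  have term_in_span: "\<phi> d * z ^ n \<in> A.span (generators E ^ K)"
    if "d \<in> E" "z \<in> {x, y}" "Suc n \<le> K" for d z n
  proof -
    have "\<phi> d * z ^ n \<in> generators E ^ Suc n"
      using that(1,2) by (intro mult_power_in_set_power) (auto simp: generators_def)
    then show ?thesis using mono[OF that(3)] A.span_superset by blast
  qed
  have le_K: "Suc (Suc n) \<le> K" if "b \<in> B" "n \<in> supp b" for b n
    unfolding K_def using that assms fin_supp by (auto intro!: Max_ge)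
  have "b \<in> A.span (generators E ^ K)" if b: "b \<in> B" for b
  proof -
    have "c b ` supp b \<union> e b ` supp b \<subseteq> E" using b by (auto simp: E_def)
    then have "\<phi> (c b n) * x ^ n \<in> A.span (generators E ^ K)"
      and "\<phi> (e b n) * y ^ Suc n \<in> A.span (generators E ^ K)" if "n \<in> supp b" for n
      using le_K[OF b that] that by (auto intro!: term_in_span simp del: power_Suc)
    then show ?thesis
      by (subst nf) (auto simp: normal_form_def supp_def intro!: A.span_add A.span_sum simp del: power_Suc)
  qed
  moreover have "finite E" unfolding E_def using assms fin_supp by simp
  ultimately show thesis by (intro that[of E K]) (auto simp: E_def K_def)
qed

end

section \<open>The case of an inner power of \<sigma>\<close>

locale gwa_inner = gwa \<iota> \<sigma> a \<phi> x y
  for \<iota> :: "'k::field \<Rightarrow> 'd::ring_1" and \<sigma> :: "'d \<Rightarrow> 'd" and a :: 'd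
    and \<phi> :: "'d \<Rightarrow> 'a::ring_1" and x y :: 'a +
  fixes m :: nat and u v :: 'd
  assumes m_pos: "m \<ge> 1" and uv: "u * v = 1" and vu: "v * u = 1"
    and sigma_power_inner: "\<And>d. (\<sigma> ^^ m) d = u * d * v"
begin

abbreviation U :: "int \<Rightarrow> 'd" where
  "U \<equiv> unit_power u v"

lemmas U_add = unit_power_add[OF uv vu]

definition sigma_int :: "int \<Rightarrow> 'd \<Rightarrow> 'd" where
  "sigma_int l = (if 0 \<le> l then \<sigma> ^^ nat l else inv \<sigma> ^^ nat (- l))"

definition monomial :: "int \<Rightarrow> 'a" where
  "monomial l = (if 0 \<le> l then x ^ nat l else y ^ nat (- l))"

lemma sigma_int_Suc: "sigma_int (l + 1) d = \<sigma> (sigma_int l d)"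
proof -
  consider "0 \<le> l" | "l = - 1" | "l < - 1" by linarith
  then show ?thesis
  proof cases
    case 1
    then have "nat (l + 1) = Suc (nat l)" by simp
    with 1 show ?thesis by (simp add: sigma_int_def)
  next
    case 2
    then show ?thesis by (simp add: sigma_int_def)
  next
    case 3
    then have "nat (- l) = Suc (nat (- (l + 1)))" by simp
    with 3 show ?thesis by (simp add: sigma_int_def)
  qed
qed

lemma sigma_int_add_period: "sigma_int (l + int m) d = u * sigma_int l d * v"
proof -
  have "sigma_int (l + int n) d = (\<sigma> ^^ n) (sigma_int l d)" for n
  proof (induction n)
    case (Suc n)
    have "l + int (Suc n) = (l + int n) + 1" by simp
    then show ?case by (simp only: sigma_int_Suc Suc funpow.simps comp_def)
  qed simp
  then show ?thesis by (simp add: sigma_power_inner)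
qed

lemma sigma_int_diff_period: "sigma_int (l - int m) d = v * sigma_int l d * u"
proof -
  have "v * sigma_int l d * u = (v * u) * sigma_int (l - int m) d * (v * u)"
    using sigma_int_add_period[of "l - int m" d] by (simp add: mult.assoc)
  then show ?thesis using vu by simp
qed

lemma sigma_int_mult_period: "sigma_int (q * int m + r) d = U q * sigma_int r d * U (- q)"
proof (induction q rule: int_induct[where k = 0])
  case (step1 i)
  have "sigma_int ((i + 1) * int m + r) d = sigma_int ((i * int m + r) + int m) d"
    by (simp add: algebra_simps)
  also have "\<dots> = (U 1 * U i) * sigma_int r d * (U (- i) * U (- 1))"
    using step1 sigma_int_add_period by (simp add: mult.assoc)
  also have "\<dots> = U (i + 1) * sigma_int r d * U (- (i + 1))"
    by (simp only: U_add) (simp add: algebra_simps)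
  finally show ?case .
next
  case (step2 i)
  have "sigma_int ((i - 1) * int m + r) d = sigma_int ((i * int m + r) - int m) d"
    by (simp add: algebra_simps)
  also have "\<dots> = (U (- 1) * U i) * sigma_int r d * (U (- i) * U 1)"
    using step2 sigma_int_diff_period by (simp add: mult.assoc)
  also have "\<dots> = U (i - 1) * sigma_int r d * U (- (i - 1))"
    by (simp only: U_add) (simp add: algebra_simps)
  finally show ?case .
qed simp

lemma sigma_int_eq_conj:
  "sigma_int l d = U (l div int m) * (\<sigma> ^^ nat (l mod int m)) d * U (- (l div int m))"
  using sigma_int_mult_period[of "l div int m" "l mod int m" d] m_pos by (simp add: sigma_int_def)

lemma monomial_mult_phi: "monomial l * \<phi> d = \<phi> (sigma_int l d) * monomial l"
  by (simp add: monomial_def sigma_int_def x_power_phi y_power_phi)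

lemma monomial_mult_x: "monomial l * x = \<phi> (if 0 \<le> l then 1 else sigma_int (l + 1) a) * monomial (l + 1)"
proof (cases "0 \<le> l")
  case True
  then have "nat (l + 1) = Suc (nat l)" by simp
  with True show ?thesis by (simp add: monomial_def phi_one power_Suc2 power_commutes)
next
  case False
  define j where "j = nat (- (l + 1))"
  have j: "nat (- l) = Suc j" using False by (simp add: j_def)
  have "monomial l * x = y ^ nat (- l) * x" using False by (simp add: monomial_def)
  also have "\<dots> = y ^ j * (y * x)" by (simp only: j power_Suc2 mult.assoc)
  also have "\<dots> = \<phi> ((inv \<sigma> ^^ j) a) * y ^ j" by (simp add: y_x y_power_phi)
  also have "\<dots> = \<phi> (sigma_int (l + 1) a) * monomial (l + 1)"
    using False by (cases "l + 1 = 0") (simp_all add: sigma_int_def monomial_def j_def)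
  finally show ?thesis using False by simp
qed

lemma monomial_mult_y: "monomial l * y = \<phi> (if l \<le> 0 then 1 else sigma_int l a) * monomial (l - 1)"
proof (cases "l \<le> 0")
  case True
  then have "nat (- (l - 1)) = Suc (nat (- l))" by simp
  with True show ?thesis
    by (cases "l = 0") (simp_all add: monomial_def phi_one power_Suc2 power_commutes)
next
  case False
  define j where "j = nat (l - 1)"
  have j: "nat l = Suc j" using False by (simp add: j_def)
  have "monomial l * y = x ^ nat l * y" using False by (simp add: monomial_def)
  also have "\<dots> = x ^ j * (x * y)" by (simp only: j power_Suc2 mult.assoc)
  also have "\<dots> = \<phi> ((\<sigma> ^^ j) (\<sigma> a)) * x ^ j" by (simp add: x_y x_power_phi)
  also have "\<dots> = \<phi> (sigma_int l a) * monomial (l - 1)"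
    using False j by (simp add: sigma_int_def monomial_def j_def funpow_swap1)
  finally show ?thesis using False by simp
qed

definition conj_generators :: "'d set \<Rightarrow> 'd set" where
  "conj_generators E = {1, u, v} \<union> (\<lambda>(r, e). (\<sigma> ^^ r) e) ` ({..<m} \<times> insert a E)"

lemma one_in_conj_generators: "1 \<in> conj_generators E"
  by (simp add: conj_generators_def)

lemma unit_power_in_conj_generators: "\<bar>j\<bar> \<le> 1 \<Longrightarrow> U j \<in> conj_generators E"
  by (cases "j = 0"; cases "j = 1"; cases "j = - 1") (auto simp: conj_generators_def)

lemma unit_power_in_power_conj_generators: "U j \<in> conj_generators E ^ nat \<bar>j\<bar>"
  by (cases "0 \<le> j") (auto simp: unit_power_def conj_generators_def intro!: power_in_set_power)

lemma sigma_mod_in_conj_generators: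
  "e \<in> insert a E \<Longrightarrow> (\<sigma> ^^ nat (l mod int m)) e \<in> conj_generators E"
  using m_pos unfolding conj_generators_def by (force simp: nat_less_iff)

text \<open>
  The invariant satisfied by products of n generators: l is the x-degree minus the
  y-degree, and d has length at most 3n because each generator adds at most three factors.
\<close>

definition normal_words :: "'d set \<Rightarrow> nat \<Rightarrow> 'a set" where
  "normal_words E n = {\<phi> (d * U (- (l div int m))) * monomial l | d l.
     d \<in> conj_generators E ^ (3 * n) \<and> \<bar>l\<bar> \<le> int n}"

lemma normal_wordsI:
  "d \<in> conj_generators E ^ (3 * n) \<Longrightarrow> \<bar>l\<bar> \<le> int n
    \<Longrightarrow> \<phi> (d * U (- (l div int m))) * monomial l \<in> normal_words E n"
  unfolding normal_words_def by blast

lemma conj_word_shift: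
  assumes d: "d \<in> conj_generators E ^ k" and l: "\<bar>l' - l\<bar> \<le> 1"
    and w: "w \<in> {1, sigma_int l a, sigma_int l' a}"
  obtains d' where "d' \<in> conj_generators E ^ (k + 3)"
    "d * U (- (l div int m)) * w = d' * U (- (l' div int m))"
proof -
  let ?Y = "conj_generators E"
  have close: "\<bar>l1 div int m - l2 div int m\<bar> \<le> 1" if "l1 \<in> {l, l'}" "l2 \<in> {l, l'}" for l1 l2
  proof -
    have "\<bar>l1 - l2\<bar> \<le> 1" using that l by (auto simp: abs_le_iff)
    then show ?thesis using m_pos by (intro abs_div_diff_le_one) auto
  qed
  have U_close: "U (l2 div int m - l1 div int m) \<in> ?Y" if "l1 \<in> {l, l'}" "l2 \<in> {l, l'}" for l1 l2
    using close[OF that(2,1)] by (rule unit_power_in_conj_generators)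
  have power_3: "((?Y ^ k * ?Y) * ?Y) * ?Y = ?Y ^ (k + 3)"
    by (simp only: numeral_3_eq_3 add_Suc_right add_0_right power_Suc2)
  consider "w = 1" | l'' where "l'' \<in> {l, l'}" "w = sigma_int l'' a" using w by blast
  then show thesis
  proof cases
    case 1
    \<comment> \<open>padded with two factors 1 so that both cases produce exactly three new factors\<close>
    define d' where "d' = d * U (l' div int m - l div int m) * 1 * 1"
    have "d' \<in> ((?Y ^ k * ?Y) * ?Y) * ?Y"
      unfolding d'_def using d U_close[of l l'] one_in_conj_generators by (intro set_times_intro) auto
    moreover have "d * U (- (l div int m)) * w = d' * U (- (l' div int m))"
      unfolding d'_def 1 by (simp add: mult.assoc U_add)
    ultimately show thesis using power_3 that by simp
  next
    case 2
    define s where "s = (\<sigma> ^^ nat (l'' mod int m)) a"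
    define d' where "d' = d * U (l'' div int m - l div int m) * s * U (l' div int m - l'' div int m)"
    have "d' \<in> ((?Y ^ k * ?Y) * ?Y) * ?Y"
      unfolding d'_def s_def using d U_close[of l l''] U_close[of l'' l'] 2(1)
        sigma_mod_in_conj_generators[of a E l'']
      by (intro set_times_intro) auto
    moreover have "d * U (- (l div int m)) * w = d' * U (- (l' div int m))"
    proof -
      have "d * U (- (l div int m)) * w
          = d * (U (- (l div int m)) * U (l'' div int m)) * s * U (- (l'' div int m))"
        unfolding 2(2) sigma_int_eq_conj[of l'' a] s_def by (simp add: mult.assoc)
      also have "\<dots> = d * U (l'' div int m - l div int m) * s
          * (U (l' div int m - l'' div int m) * U (- (l' div int m)))"
        by (simp add: U_add)
      finally show ?thesis unfolding d'_def by (simp add: mult.assoc)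
    qed
    ultimately show thesis using power_3 that by simp
  qed
qed

lemma normal_words_mult_monomial:
  assumes d: "d \<in> conj_generators E ^ (3 * n)" and l: "\<bar>l\<bar> \<le> int n" "\<bar>l' - l\<bar> \<le> 1"
    and w: "w \<in> {1, sigma_int l a, sigma_int l' a}"
  shows "\<phi> (d * U (- (l div int m))) * (\<phi> w * monomial l') \<in> normal_words E (Suc n)"
proof -
  obtain d' where d': "d' \<in> conj_generators E ^ (3 * Suc n)"
      "d * U (- (l div int m)) * w = d' * U (- (l' div int m))"
    using conj_word_shift[OF d l(2) w] by (metis mult_Suc_right add.commute)
  have "\<phi> (d * U (- (l div int m))) * (\<phi> w * monomial l') = \<phi> (d' * U (- (l' div int m))) * monomial l'"
    by (simp only: d'(2) mult.assoc[symmetric] phi_mult[symmetric])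
  moreover have "\<bar>l'\<bar> \<le> int (Suc n)" using l by simp
  ultimately show ?thesis using normal_wordsI[OF d'(1)] by simp
qed

lemma normal_words_mult_phi:
  assumes d: "d \<in> conj_generators E ^ (3 * n)" and l: "\<bar>l\<bar> \<le> int n" and e: "e \<in> E"
  shows "\<phi> (d * U (- (l div int m))) * monomial l * \<phi> e \<in> normal_words E (Suc n)"
proof -
  define s where "s = (\<sigma> ^^ nat (l mod int m)) e"
  have conj: "U (- (l div int m)) * sigma_int l e = s * U (- (l div int m))"
    using U_add[of "- (l div int m)" "l div int m"]
    by (simp add: sigma_int_eq_conj[of l e] s_def flip: mult.assoc)
  have "\<phi> (d * U (- (l div int m))) * monomial l * \<phi> e
      = \<phi> (d * (U (- (l div int m)) * sigma_int l e)) * monomial l"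
    by (simp add: mult.assoc monomial_mult_phi phi_mult)
  also have "\<dots> = \<phi> ((d * s) * U (- (l div int m))) * monomial l"
    by (simp add: conj mult.assoc)
  finally have eq: "\<phi> (d * U (- (l div int m))) * monomial l * \<phi> e
      = \<phi> ((d * s) * U (- (l div int m))) * monomial l" .
  have "d * s \<in> conj_generators E ^ Suc (3 * n)"
    unfolding power_Suc2 s_def using d e sigma_mod_in_conj_generators by (intro set_times_intro) auto
  moreover have "conj_generators E ^ Suc (3 * n) \<subseteq> conj_generators E ^ (3 * Suc n)"
    by (rule set_power_mono_exp[OF one_in_conj_generators]) simp
  ultimately show ?thesis using normal_wordsI[of "d * s" E "Suc n" l] l eq by auto
qed

lemma normal_words_mult_generator:
  assumes p: "p \<in> normal_words E n" and g: "g \<in> generators E"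
  shows "p * g \<in> normal_words E (Suc n)"
proof -
  obtain d l where dl: "p = \<phi> (d * U (- (l div int m))) * monomial l"
      "d \<in> conj_generators E ^ (3 * n)" "\<bar>l\<bar> \<le> int n"
    using p unfolding normal_words_def by blast
  from g consider "g = x" | "g = y" | e where "e \<in> E" "g = \<phi> e"
    unfolding generators_def by blast
  then show ?thesis
  proof cases
    case 1
    then have "p * g = \<phi> (d * U (- (l div int m)))
        * (\<phi> (if 0 \<le> l then 1 else sigma_int (l + 1) a) * monomial (l + 1))"
      using dl(1) by (simp add: mult.assoc monomial_mult_x)
    moreover have "(if 0 \<le> l then 1 else sigma_int (l + 1) a) \<in> {1, sigma_int l a, sigma_int (l + 1) a}"
      by simp
    ultimately show ?thesis using normal_words_mult_monomial[OF dl(2,3)] by simp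
  next
    case 2
    then have "p * g = \<phi> (d * U (- (l div int m)))
        * (\<phi> (if l \<le> 0 then 1 else sigma_int l a) * monomial (l - 1))"
      using dl(1) by (simp add: mult.assoc monomial_mult_y)
    moreover have "(if l \<le> 0 then 1 else sigma_int l a) \<in> {1, sigma_int l a, sigma_int (l - 1) a}"
      by simp
    ultimately show ?thesis using normal_words_mult_monomial[OF dl(2,3)] by simp
  next
    case 3
    then show ?thesis using normal_words_mult_phi[OF dl(2,3)] dl(1) by simp
  qed
qed

lemma generators_power_subset_normal_words: "generators E ^ n \<subseteq> normal_words E n"
proof (induction n)
  case 0
  show ?case using normal_wordsI[of 1 E 0 0] by (simp add: monomial_def phi_one)
next
  case (Suc n)
  show ?case
  proof
    fix w assume "w \<in> generators E ^ Suc n"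
    then obtain p g where "w = p * g" "p \<in> generators E ^ n" "g \<in> generators E"
      unfolding power_Suc2 by (auto elim: set_times_elim)
    then show "w \<in> normal_words E (Suc n)" using Suc normal_words_mult_generator by blast
  qed
qed

lemma normal_words_subset:
  "normal_words E N \<subseteq> (\<Union>l\<in>{- int N..int N}. (\<lambda>d. \<phi> d * monomial l) ` (conj_generators E ^ (4 * N)))"
proof
  fix w assume "w \<in> normal_words E N"
  then obtain d l where w: "w = \<phi> (d * U (- (l div int m))) * monomial l"
      "d \<in> conj_generators E ^ (3 * N)" "\<bar>l\<bar> \<le> int N"
    unfolding normal_words_def by blast
  have "d * U (- (l div int m)) \<in> conj_generators E ^ (3 * N) * conj_generators E ^ nat \<bar>l div int m\<bar>"
    using w(2) unit_power_in_power_conj_generators[of "- (l div int m)"] by (intro set_times_intro) auto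
  also have "\<dots> \<subseteq> conj_generators E ^ (4 * N)"
    unfolding power_add[symmetric] using abs_div_le_abs[of "int m" l] m_pos w(3)
    by (intro set_power_mono_exp[OF one_in_conj_generators]) auto
  finally have "w \<in> (\<lambda>d. \<phi> d * monomial l) ` (conj_generators E ^ (4 * N))" using w(1) by blast
  with w(3) show "w \<in> (\<Union>l\<in>{- int N..int N}. (\<lambda>d. \<phi> d * monomial l) ` (conj_generators E ^ (4 * N)))"
    by (auto simp: abs_le_iff)
qed

lemma dim_le_growth_conj_generators:
  assumes "finite E" and V: "V \<subseteq> A.span (generators E ^ N)"
  shows "A.dim V \<le> (2 * N + 1) * D.growth (conj_generators E) (4 * N)"
proof -
  define S where "S = conj_generators E ^ (4 * N)"
  have "finite S"
    unfolding S_def using assms(1) by (intro finite_set_power) (simp add: conj_generators_def)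
  obtain \<beta> where \<beta>: "\<beta> \<subseteq> D.span S" "D.independent \<beta>" "D.span S \<subseteq> D.span \<beta>"
      "card \<beta> = D.dim (D.span S)"
    using D.basis_exists by blast
  have "finite \<beta>" using D.independent_span_bound \<open>finite S\<close> \<beta>(1,2) by blast
  define I where "I = {- int N..int N}"
  define W where "W = (\<Union>l\<in>I. (\<lambda>d. \<phi> d * monomial l) ` \<beta>)"
  have "generators E ^ N \<subseteq> A.span W"
  proof
    fix w assume "w \<in> generators E ^ N"
    then obtain l d where "l \<in> I" "d \<in> S" "w = \<phi> d * monomial l"
      using generators_power_subset_normal_words normal_words_subset unfolding I_def S_def by blast
    moreover have "A.span ((\<lambda>d. \<phi> d * monomial l) ` \<beta>) \<subseteq> A.span W" if "l \<in> I" for l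
      using that unfolding W_def by (intro A.span_mono) blast
    ultimately show "w \<in> A.span W" using phi_mult_in_span \<beta>(3) D.span_base by blast
  qed
  then have "A.span (generators E ^ N) \<subseteq> A.span W" by (intro A.span_minimal A.subspace_span)
  then have "A.dim V \<le> card W"
    using V \<open>finite \<beta>\<close> by (intro A.dim_le_card) (auto simp: W_def I_def)
  also have "\<dots> \<le> (\<Sum>l\<in>I. card ((\<lambda>d. \<phi> d * monomial l) ` \<beta>))"
    unfolding W_def I_def by (rule card_UN_le) simp
  also have "\<dots> \<le> (\<Sum>l\<in>I. card \<beta>)" by (intro sum_mono card_image_le \<open>finite \<beta>\<close>)
  also have "\<dots> = (2 * N + 1) * card \<beta>" unfolding I_def by (simp add: nat_add_distrib nat_mult_distrib)
  also have "insert 1 (conj_generators E) = conj_generators E"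
    using one_in_conj_generators by blast
  then have "card \<beta> = D.growth (conj_generators E) (4 * N)"
    using \<beta>(4) by (simp add: D.growth_def S_def)
  finally show ?thesis .
qed

lemma GKdim_upper_bound: "GKdim (\<lambda>c b. \<phi> (\<iota> c) * b) \<le> GKdim (\<lambda>c d. \<iota> c * d) + 1"
proof -
  have "growth_degree (A.growth B) \<le> GKdim (\<lambda>c d. \<iota> c * d) + 1" if B: "finite B" for B
  proof -
    from B have "finite (insert 1 B)" by simp
    then obtain E K where E: "finite E" "K \<ge> 1" "insert 1 B \<subseteq> A.span (generators E ^ K)"
      by (rule finite_subset_span_generators)
    have "A.growth B n \<le> (3 * K) * n * D.growth (conj_generators E) ((4 * K) * n)" if "n \<ge> 1" for n
    proof -
      have "A.span ((insert 1 B) ^ n) \<subseteq> A.span (generators E ^ (K * n))"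
        using A.span_set_power_le[OF E(3)] by (intro A.span_minimal) auto
      then have "A.growth B n \<le> (2 * (K * n) + 1) * D.growth (conj_generators E) (4 * (K * n))"
        unfolding A.growth_def by (rule dim_le_growth_conj_generators[OF E(1)])
      also have "\<dots> \<le> (3 * K * n) * D.growth (conj_generators E) (4 * (K * n))"
        using that E(2) by (intro mult_le_mono1) simp
      finally show ?thesis by (simp add: mult.assoc)
    qed
    then have "growth_degree (A.growth B) \<le> growth_degree (D.growth (conj_generators E)) + 1"
      using E(1) B E(2)
      by (intro growth_degree_le_plus_one[where K = "4 * K" and c = "3 * K"] A.growth_pos D.growth_pos)
        (auto simp: conj_generators_def)
    also have "growth_degree (D.growth (conj_generators E)) \<le> GKdim (\<lambda>c d. \<iota> c * d)"
      unfolding D.GKdim_eq_SUP_growth_degree using E(1) by (intro SUP_upper) (simp add: conj_generators_def)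
    finally show ?thesis by (simp add: add_right_mono)
  qed
  then show ?thesis unfolding A.GKdim_eq_SUP_growth_degree by (intro SUP_least) auto
qed

end

theorem proposition3p2:
  fixes \<iota> :: "'k::field \<Rightarrow> 'd::ring_1"
    and \<sigma> :: "'d \<Rightarrow> 'd" and a :: 'd
    and \<phi> :: "'d \<Rightarrow> 'a::ring_1" and x y :: 'a
  assumes "k_algebra_emb \<iota>"
    and "k_algebra_aut \<iota> \<sigma>"
    and "\<forall>d. a * d = d * a"
    and "is_GWA \<sigma> a \<phi> x y"
  shows "((\<exists>m\<ge>1. \<exists>u v. u * v = 1 \<and> v * u = 1 \<and> (\<forall>d. (\<sigma> ^^ m) d = u * d * v))
            \<longrightarrow> GKdim (\<lambda>c b. \<phi> (\<iota> c) * b) = GKdim (\<lambda>c d. \<iota> c * d) + 1)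
       \<and> ((\<exists>m\<ge>1. \<sigma> ^^ m = id)
            \<longrightarrow> GKdim (\<lambda>c b. \<phi> (\<iota> c) * b) = GKdim (\<lambda>c d. \<iota> c * d) + 1)"
proof -
  have inner: "GKdim (\<lambda>c b. \<phi> (\<iota> c) * b) = GKdim (\<lambda>c d. \<iota> c * d) + 1"
    if "m \<ge> 1" "u * v = 1" "v * u = 1" "\<forall>d. (\<sigma> ^^ m) d = u * d * v" for m u v
  proof -
    interpret gwa_inner \<iota> \<sigma> a \<phi> x y m u v
      using assms(1,2,4) that by unfold_locales auto
    show ?thesis using GKdim_upper_bound GKdim_lower_bound by (rule antisym)
  qed
  show ?thesis
  proof (intro conjI impI)
    assume "\<exists>m\<ge>1. \<exists>u v. u * v = 1 \<and> v * u = 1 \<and> (\<forall>d. (\<sigma> ^^ m) d = u * d * v)"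
    then show "GKdim (\<lambda>c b. \<phi> (\<iota> c) * b) = GKdim (\<lambda>c d. \<iota> c * d) + 1" using inner by blast
  next
    assume "\<exists>m\<ge>1. \<sigma> ^^ m = id"
    then show "GKdim (\<lambda>c b. \<phi> (\<iota> c) * b) = GKdim (\<lambda>c d. \<iota> c * d) + 1"
      using inner[of _ 1 1] by auto
  qed
qed

end
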